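(* Let $d,k\ge1$, let $g:\mathbb{R}^k\to\mathbb{R}$ be differentiable with $g(0)=0$ and $\nabla g(0)\neq \mathbf{0}$, and for $B\in\mathbb{R}^{k\times d}$ let $f(z)=g(Bz)$. Given $n$ training samples $\{(x_i,y_i)\}_{i=1}^n\subset\mathbb{R}^d\times\mathbb{R}$, suppose $f$ is trained to minimize $\frac12\sum_{i=1}^n(y_i-f(x_i))^2$ by gradient descent on $B$ with learning rate $\eta>0$, starting from $B^{(0)}=\mathbf{0}$. Let $B^{(1)}$ be the weight after one gradient descent step and $f_1(z):=g(B^{(1)}z)$. Then for every $z\in\mathbb{R}^d$, $$\nabla f_1(z)\,\nabla f_1(z)^T\propto {B^{(1)}}^TB^{(1)},$$ i.e. $\nabla f_1(z)\nabla f_1(z)^T$ is a scalar multiple of ${B^{(1)}}^TB^{(1)}$.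
   Context: $\nabla f_1(z)\in\mathbb{R}^d$ is the gradient of $f_1$ with respect to its input. "$P\propto Q$" for matrices means $P=cQ$ for some scalar $c$. *)

theory Defs
  imports "HOL-Analysis.Analysis"
begin

definition outer :: "real^'n \<Rightarrow> real^'m \<Rightarrow> real^'m^'n" where
  "outer u v = (\<chi> i j. u $ i * v $ j)"

definition sq_loss :: "(real^'k \<Rightarrow> real) \<Rightarrow> nat \<Rightarrow> (nat \<Rightarrow> real^'d) \<Rightarrow> (nat \<Rightarrow> real)
    \<Rightarrow> real^'d^'k \<Rightarrow> real" where
  "sq_loss g n x y B = (1/2) * (\<Sum>i=1..n. (y i - g (B *v x i))^2)"

end

theory Submission
  imports Defs
begin

(* At B = 0 the gradient of the loss is the rank-one matrix -grad g(0) v^T with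
   v = sum_i y_i x_i, so the first step gives B1 = eta grad g(0) v^T.
   For a rank-one matrix B = u v^T the gradient of z |-> g(B z) is
   B^T grad g(B z) = (grad g(B z) . u) v, a multiple of v; hence its outer square
   is a multiple of v v^T, and so is B^T B = (u . u) v v^T. *)

lemma inner_outer: "outer a x \<bullet> H = a \<bullet> (H *v x)"
  by (simp add: inner_vec_def outer_def matrix_vector_mult_def sum_distrib_left mult_ac)

lemma outer_scaleR_left: "outer (c *\<^sub>R u) v = c *\<^sub>R outer u v"
  by (simp add: outer_def vec_eq_iff)

lemma outer_scaleR_right: "outer u (c *\<^sub>R v) = c *\<^sub>R outer u v"
  by (simp add: outer_def vec_eq_iff mult.left_commute)

lemma outer_sum_right: "outer u (\<Sum>i\<in>A. f i) = (\<Sum>i\<in>A. outer u (f i))"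
  by (simp add: outer_def vec_eq_iff sum_component sum_distrib_left)

lemma vector_matrix_mult_outer: "a v* outer u v = (a \<bullet> u) *\<^sub>R v"
  by (simp add: outer_def vec_eq_iff vector_matrix_mult_def inner_vec_def sum_distrib_left mult_ac)

lemma transpose_outer_mult_outer:
  "transpose (outer u v) ** outer u w = (u \<bullet> u) *\<^sub>R outer v w"
  by (simp add: outer_def vec_eq_iff matrix_matrix_mult_def transpose_def inner_vec_def
      sum_distrib_left mult_ac)

lemma outer_square_proportional_gram_rank_one:
  fixes a u :: "real^'m" and v :: "real^'n"
  shows "\<exists>c. outer (a v* outer u v) (a v* outer u v) = c *\<^sub>R (transpose (outer u v) ** outer u v)"
proof -
  \<comment> \<open>For u = 0 the junk quotient x / 0 = 0 is harmless, since then a \<bullet> u = 0 too.\<close>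
  have "(a \<bullet> u)\<^sup>2 = ((a \<bullet> u)\<^sup>2 / (u \<bullet> u)) * (u \<bullet> u)"
    by (cases "u = 0") simp_all
  then have "outer (a v* outer u v) (a v* outer u v)
      = ((a \<bullet> u)\<^sup>2 / (u \<bullet> u)) *\<^sub>R (transpose (outer u v) ** outer u v)"
    by (simp add: vector_matrix_mult_outer outer_scaleR_left outer_scaleR_right
        transpose_outer_mult_outer power2_eq_square)
  then show ?thesis ..
qed

lemma differentiable_imp_gderiv:
  fixes g :: "'a::euclidean_space \<Rightarrow> real"
  assumes "g differentiable (at w)"
  shows "\<exists>a. GDERIV g w :> a"
proof -
  obtain D where D: "(g has_derivative D) (at w)"
    using assms differentiable_def by blast
  then have "D = (\<lambda>h. h \<bullet> adjoint D 1)"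
    by (simp add: adjoint_works has_derivative_linear)
  then show ?thesis
    using D unfolding gderiv_def by metis
qed

lemma gderiv_unique:
  assumes "GDERIV f x :> a" and "GDERIV f x :> b"
  shows "a = b"
proof -
  have "(\<lambda>h. h \<bullet> a) = (\<lambda>h. h \<bullet> b)"
    using assms unfolding gderiv_def by (rule has_derivative_unique)
  then have "(a - b) \<bullet> (a - b) = 0"
    by (metis inner_diff_left inner_diff_right right_minus_eq)
  then show ?thesis
    by simp
qed

lemma gderiv_compose_matrix_vector_mult:
  fixes g :: "real^'m \<Rightarrow> real" and A :: "real^'n^'m"
  assumes "GDERIV g (A *v z) :> a"
  shows "GDERIV (\<lambda>w. g (A *v w)) z :> a v* A"
proof -
  have "(g has_derivative (\<lambda>h. a \<bullet> h)) (at (A *v z))"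
    using assms unfolding gderiv_def by (simp add: inner_commute)
  then have "((\<lambda>w. g (A *v w)) has_derivative (\<lambda>h. a \<bullet> (A *v h))) (at z)"
    by (rule has_derivative_compose[OF matrix_vector_mul_bounded_linear
          [THEN bounded_linear.has_derivative, OF has_derivative_ident]])
  then show ?thesis
    unfolding gderiv_def by (simp add: dot_lmul_matrix inner_commute[of _ "a v* A"])
qed

lemma gderiv_compose_apply_matrix:
  fixes g :: "real^'m \<Rightarrow> real" and B :: "real^'n^'m"
  assumes "GDERIV g (B *v x) :> a"
  shows "GDERIV (\<lambda>B. g (B *v x)) B :> outer a x"
proof -
  have "bounded_linear (\<lambda>B::real^'n^'m. B *v x)"
    by (simp add: linear_conv_bounded_linear[symmetric] linearI
          matrix_vector_mult_add_rdistrib scaleR_matrix_vector_assoc)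
  moreover have "(g has_derivative (\<lambda>h. a \<bullet> h)) (at (B *v x))"
    using assms unfolding gderiv_def by (simp add: inner_commute)
  ultimately have "((\<lambda>B. g (B *v x)) has_derivative (\<lambda>H. a \<bullet> (H *v x))) (at B)"
    by (rule has_derivative_compose[OF bounded_linear.has_derivative[OF _ has_derivative_ident]])
  then show ?thesis
    unfolding gderiv_def by (simp add: inner_outer inner_commute[of _ "outer a x"])
qed

lemma gderiv_sq_loss:
  assumes "\<And>i. GDERIV g (B *v x i) :> a i"
  shows "GDERIV (sq_loss g n x y) B :>
           - (\<Sum>i=1..n. (y i - g (B *v x i)) *\<^sub>R outer (a i) (x i))"
proof -
  have "((\<lambda>B. g (B *v x i)) has_derivative (\<lambda>H. H \<bullet> outer (a i) (x i))) (at B)" for i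
    using gderiv_compose_apply_matrix[OF assms] unfolding gderiv_def .
  then have "(sq_loss g n x y has_derivative (\<lambda>H. (1/2) * (\<Sum>i=1..n.
      2 * (y i - g (B *v x i)) * - (H \<bullet> outer (a i) (x i))))) (at B)"
    unfolding sq_loss_def[abs_def] by (auto intro!: derivative_eq_intros simp: algebra_simps)
  also have "(\<lambda>H. (1/2) * (\<Sum>i=1..n. 2 * (y i - g (B *v x i)) * - (H \<bullet> outer (a i) (x i))))
      = (\<lambda>H. H \<bullet> - (\<Sum>i=1..n. (y i - g (B *v x i)) *\<^sub>R outer (a i) (x i)))"
    by (simp add: inner_sum_right sum_distrib_left sum_negf[symmetric] algebra_simps)
  finally show ?thesis
    unfolding gderiv_def .
qed

theorem proposition2:
  fixes g :: "real^'k \<Rightarrow> real" and grad0 :: "real^'k"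
    and n :: nat and x :: "nat \<Rightarrow> real^'d" and y :: "nat \<Rightarrow> real"
    and \<eta> :: real and G B1 :: "real^'d^'k"
  assumes diff: "\<forall>w. g differentiable (at w)"
    and g0: "g 0 = 0"
    and grad0: "GDERIV g 0 :> grad0" and grad0_nz: "grad0 \<noteq> 0"
    and eta: "\<eta> > 0"
    and lossgrad: "GDERIV (sq_loss g n x y) 0 :> G"
    and step: "B1 = 0 - \<eta> *\<^sub>R G"
  shows "\<forall>z :: real^'d. \<exists>D. GDERIV (\<lambda>w. g (B1 *v w)) z :> D \<and>
           (\<exists>c::real. outer D D = c *\<^sub>R (transpose B1 ** B1))"
proof -
  define v where "v = (\<Sum>i=1..n. y i *\<^sub>R x i)"
  have "GDERIV (sq_loss g n x y) 0 :> - outer grad0 v"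
    using gderiv_sq_loss[of g 0 x "\<lambda>_. grad0" n y] grad0 g0
    by (simp add: v_def outer_sum_right outer_scaleR_right)
  then have "G = - outer grad0 v"
    using lossgrad gderiv_unique by blast
  then have B1: "B1 = outer (\<eta> *\<^sub>R grad0) v"
    using step by (simp add: outer_scaleR_left)
  show ?thesis
  proof
    fix z :: "real^'d"
    obtain a where "GDERIV g (B1 *v z) :> a"
      using diff differentiable_imp_gderiv by blast
    then have "GDERIV (\<lambda>w. g (B1 *v w)) z :> a v* B1"
      by (rule gderiv_compose_matrix_vector_mult)
    then show "\<exists>D. GDERIV (\<lambda>w. g (B1 *v w)) z :> D \<and>
        (\<exists>c::real. outer D D = c *\<^sub>R (transpose B1 ** B1))"
      using outer_square_proportional_gram_rank_one[of a "\<eta> *\<^sub>R grad0" v] B1 by blast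
  qed
qed

end
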